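(* Run the mechanism BFM-SWM described in the context with $\ell=2$ and arbitrary $B>0$, $\alpha>1$, $\beta>1$, $\epsilon>0$, with all sellers behaving truthfully, and let $S_{i,t}$ ($i\in\{1,2\}$, $t\in[M]$), $\rho_M$, $u^*$ be as defined in the context. Let $O$ be an optimal solution of $\max\{v(S)-c(S): S\subseteq\mathcal{N},\ c(S)\le B\}$. Then $$v(O)-2\beta\cdot c(O)\ \le\ 2\rho_M+2\sum_{i=1}^{2}\sum_{t=1}^{M}v(S_{i,t})+2v(u^* ).$$
   Context: Setting. $\mathcal{N}$ is a finite set of $n$ sellers. The valuation $v:2^{\mathcal{N}}\to\mathbb{R}_{\ge 0}$ satisfies $v(\emptyset)=0$ and is submodular (for $X\subseteq Y\subseteq\mathcal{N}$ and $u\notin Y$, $v(u\mid Y)\le v(u\mid X)$), not necessarily monotone, where $v(S\mid T)=v(S\cup T)-v(T)$, $v(u\mid T)=v(\{u\}\mid T)$. Each seller $u$ has a private cost $c(u)\ge 0$; $c(X)=\sum_{u\in X}c(u)$, $p(X)=\sum_{u\in X}p(u)$. $B>0$ is the budget, $[\ell]=\{1,\dots,\ell\}$. Sellers behave truthfully: a seller $u$ offered price $q$ accepts iff $c(u)\le q$. Mechanism BFM-SWM (inputs $B$, $\alpha>1$, $\beta>1$, $\epsilon>0$, $\ell\in\{1,2\}$): 1. Offer every seller the price $B$; let $R$ be the set of sellers who accept, and set $p(u)=B$ for $u\in R$. 2. Set $t=0$, $\rho_0=\epsilon/\alpha$, $u^*=\emptyset$ ($u^*$ is a set of at most one seller),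 and $S_{i,0}=\emptyset$ for $i\in[\ell]$. 3. Repeat rounds: set $t\leftarrow t+1$, $\rho_t=\alpha\rho_{t-1}$, $S_{i,t}=\emptyset$ for all $i\in[\ell]$. Process the sellers $u\in R\setminus(\bigcup_{i=1}^{\ell}S_{i,t-1}\cup u^* )$ one at a time in a fixed order. For each such $u$: pick $j\in\arg\max_{i\in[\ell]}v(u\mid S_{i,t})$ (current contents); update $p(u)\leftarrow\min\{p(u),\ v(u\mid S_{j,t})/(\beta+\rho_t/B)\}$ and offer $p(u)$ to $u$. If $u$ accepts: if $v(S_{j,t}\cup\{u\})-p(S_{j,t}\cup\{u\})>\rho_t$ (current prices), set $u^*\leftarrow\{u\}$ and end the round immediately; otherwise add $u$ to $S_{j,t}$. If $u$ rejects, remove $u$ from $R$. After the round, stop if $R\setminus\left(\bigcup_{i=1}^{\ell}(S_{i,t-1}\cup S_{i,t})\cup u^*\right)=\emptyset$; otherwise start another round. 4. Let $M$ be the final value of $t$. Output $S^*\in\arg\max_{A\in\{S_{i,t}: i\in[\ell],\ t\in\{M-1,M\}\}\cup\{u^*\}}\big(v(A)-p(A)\big)$, paying each $u\in S^*$ its current price $p(u)$. Notation: $S_{i,t}$ denotes the contents of that candidate set at the end of round $t$; $\rho_M$ is the threshold of the last round; $u^*$ denotes its value at termination (possibly $\emptyset$, with $v(\emptyset)=0$). *)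

theory Defs
  imports Main "HOL.Real"
begin

text \<open>Mechanism BFM-SWM with ell = 2. The ground set of sellers is set order,
  where the list order is the fixed processing order.\<close>

record 'a bfm_state =
  Rs :: "'a set"
  prc :: "'a \<Rightarrow> real"
  S1 :: "'a set"
  S2 :: "'a set"
  ust :: "'a set"
  stopd :: bool

definition marg :: "('a set \<Rightarrow> real) \<Rightarrow> 'a \<Rightarrow> 'a set \<Rightarrow> real" where
  "marg v u T = v (insert u T) - v T"

definition rho :: "real \<Rightarrow> real \<Rightarrow> nat \<Rightarrow> real" where
  "rho eps alpha t = eps / alpha * alpha ^ t"

definition bfm_step ::
  "('a set \<Rightarrow> real) \<Rightarrow> ('a \<Rightarrow> real) \<Rightarrow> real \<Rightarrow> real \<Rightarrow>
   (nat \<Rightarrow> 'a set \<Rightarrow> 'a set \<Rightarrow> 'a \<Rightarrow> bool) \<Rightarrow> nat \<Rightarrow> real \<Rightarrow>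
   'a \<Rightarrow> 'a bfm_state \<Rightarrow> 'a bfm_state" where
  "bfm_step v c B beta tie t r u s =
    (if stopd s then s else
     (let j1 = (marg v u (S1 s) > marg v u (S2 s) \<or>
                (marg v u (S1 s) = marg v u (S2 s) \<and> tie t (S1 s) (S2 s) u));
          Sj = (if j1 then S1 s else S2 s);
          q = min (prc s u) (marg v u Sj / (beta + r / B));
          p' = (prc s)(u := q)
      in if c u \<le> q then
           (if v (insert u Sj) - sum p' (insert u Sj) > r
            then s\<lparr>prc := p', ust := {u}, stopd := True\<rparr>
            else if j1 then s\<lparr>prc := p', S1 := insert u Sj\<rparr>
            else s\<lparr>prc := p', S2 := insert u Sj\<rparr>)
         else s\<lparr>prc := p', Rs := Rs s - {u}\<rparr>))"

text \<open>Round t, started from the state at the end of round t-1 (whose S1, S2 are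
  S_{1,t-1}, S_{2,t-1}). Returns the state at the end of round t.\<close>
definition bfm_round ::
  "'a list \<Rightarrow> ('a set \<Rightarrow> real) \<Rightarrow> ('a \<Rightarrow> real) \<Rightarrow> real \<Rightarrow> real \<Rightarrow> real \<Rightarrow> real \<Rightarrow>
   (nat \<Rightarrow> 'a set \<Rightarrow> 'a set \<Rightarrow> 'a \<Rightarrow> bool) \<Rightarrow> nat \<Rightarrow> 'a bfm_state \<Rightarrow> 'a bfm_state" where
  "bfm_round order v c B alpha beta eps tie t s =
    (let L = filter (\<lambda>u. u \<in> Rs s - (S1 s \<union> S2 s \<union> ust s)) order;
         s0 = s\<lparr>S1 := {}, S2 := {}, stopd := False\<rparr>
     in fold (bfm_step v c B beta tie t (rho eps alpha t)) L s0)"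

text \<open>State at the end of round t (t = 0: after step 2).\<close>
primrec bfm ::
  "'a list \<Rightarrow> ('a set \<Rightarrow> real) \<Rightarrow> ('a \<Rightarrow> real) \<Rightarrow> real \<Rightarrow> real \<Rightarrow> real \<Rightarrow> real \<Rightarrow>
   (nat \<Rightarrow> 'a set \<Rightarrow> 'a set \<Rightarrow> 'a \<Rightarrow> bool) \<Rightarrow> nat \<Rightarrow> 'a bfm_state" where
  "bfm order v c B alpha beta eps tie 0 =
     \<lparr>Rs = {u \<in> set order. c u \<le> B}, prc = (\<lambda>_. B), S1 = {}, S2 = {}, ust = {}, stopd = False\<rparr>"
| "bfm order v c B alpha beta eps tie (Suc t) =
     bfm_round order v c B alpha beta eps tie (Suc t) (bfm order v c B alpha beta eps tie t)"

text \<open>Stopping test after round t (t \<ge> 1).\<close>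
definition bfm_stops ::
  "'a list \<Rightarrow> ('a set \<Rightarrow> real) \<Rightarrow> ('a \<Rightarrow> real) \<Rightarrow> real \<Rightarrow> real \<Rightarrow> real \<Rightarrow> real \<Rightarrow>
   (nat \<Rightarrow> 'a set \<Rightarrow> 'a set \<Rightarrow> 'a \<Rightarrow> bool) \<Rightarrow> nat \<Rightarrow> bool" where
  "bfm_stops order v c B alpha beta eps tie t =
    (let s' = bfm order v c B alpha beta eps tie (t - 1);
         s = bfm order v c B alpha beta eps tie t
     in Rs s - (S1 s' \<union> S2 s' \<union> S1 s \<union> S2 s \<union> ust s) = {})"

definition submodular_on :: "'a set \<Rightarrow> ('a set \<Rightarrow> real) \<Rightarrow> bool" where
  "submodular_on N v = (\<forall>X Y u. X \<subseteq> Y \<and> Y \<subseteq> N \<and> u \<in> N - Y \<longrightarrow>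
      v (insert u Y) - v Y \<le> v (insert u X) - v X)"

end

theory Submission
  imports Defs
begin

(* Within a round the two candidate sets stay disjoint and absorb each other,
   v (S\<^sub>i \<union> T) \<le> v S\<^sub>1 + v S\<^sub>2 for T \<subseteq> S\<^sub>j, because an accepted seller joins the set
   where its marginal is larger and nonnegative.  A seller rejected in round t has marginal
   below (\<beta> + \<rho>\<^sub>t / B) c u to both sets, and by submodularity this persists to the end of
   the round.  When the mechanism stops, every seller of O was rejected in some round, lies
   in some S\<^sub>i\<^sub>,\<^sub>t, or is u*.  For the part X\<^sub>t of O rejected in round t, the sets
   S\<^sub>1\<^sub>,\<^sub>t \<union> (O \<inter> S\<^sub>2\<^sub>,\<^sub>t) \<union> X\<^sub>t and S\<^sub>2\<^sub>,\<^sub>t \<union> (O \<inter> S\<^sub>1\<^sub>,\<^sub>t) \<union> X\<^sub>t have value at most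
   v S\<^sub>1\<^sub>,\<^sub>t + v S\<^sub>2\<^sub>,\<^sub>t + (\<beta> + \<rho>\<^sub>t / B) c X\<^sub>t each, and their intersection is round t's
   share of O; submodularity, subadditivity over the rounds and c O \<le> B give the claim. *)

locale submodular_valuation =
  fixes N :: "'a set" and v :: "'a set \<Rightarrow> real"
  assumes finite_ground: "finite N"
    and v_empty: "v {} = 0"
    and v_nonneg: "S \<subseteq> N \<Longrightarrow> 0 \<le> v S"
    and submodular: "submodular_on N v"
begin

lemma marg_antimono:
  assumes "X \<subseteq> Y" "Y \<subseteq> N" "u \<in> N - Y"
  shows "marg v u Y \<le> marg v u X"
  using submodular assms unfolding submodular_on_def marg_def by blast

lemma set_marg_antimono:
  assumes "X \<subseteq> Y" "Y \<subseteq> N" "D \<subseteq> N" "D \<inter> Y = {}"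
  shows "v (Y \<union> D) - v Y \<le> v (X \<union> D) - v X"
proof -
  have "finite D"
    using assms(3) finite_ground finite_subset by blast
  then show ?thesis
    using assms(3,4)
  proof (induction D rule: finite_induct)
    case empty
    then show ?case by simp
  next
    case (insert x D)
    have "marg v x (Y \<union> D) \<le> marg v x (X \<union> D)"
      using insert assms(1,2) by (intro marg_antimono) auto
    with insert show ?case
      by (simp add: marg_def)
  qed
qed

lemma union_inter_le:
  assumes "A \<subseteq> N" "C \<subseteq> N"
  shows "v (A \<union> C) + v (A \<inter> C) \<le> v A + v C"
proof -
  have "v (A \<union> (C - A)) - v A \<le> v (A \<inter> C \<union> (C - A)) - v (A \<inter> C)"
    using assms by (intro set_marg_antimono) auto
  moreover have "A \<union> (C - A) = A \<union> C" "A \<inter> C \<union> (C - A) = C"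
    by auto
  ultimately show ?thesis
    by simp
qed

lemma subadditive:
  assumes "A \<subseteq> N" "C \<subseteq> N"
  shows "v (A \<union> C) \<le> v A + v C"
proof -
  have "0 \<le> v (A \<inter> C)"
    using assms by (intro v_nonneg) auto
  with union_inter_le[OF assms] show ?thesis
    by linarith
qed

lemma subadditive_UN:
  assumes "finite I" "\<And>i. i \<in> I \<Longrightarrow> A i \<subseteq> N"
  shows "v (\<Union>i\<in>I. A i) \<le> (\<Sum>i\<in>I. v (A i))"
  using assms
proof (induction I rule: finite_induct)
  case empty
  then show ?case
    using v_empty by simp
next
  case (insert i I)
  have "v (\<Union>j\<in>insert i I. A j) \<le> v (A i) + v (\<Union>j\<in>I. A j)"
    using insert.prems by (auto intro: subadditive)
  with insert show ?case
    by simp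
qed

lemma union_le_marg_sum:
  assumes "W \<subseteq> N" "X \<subseteq> N" "W \<inter> X = {}"
  shows "v (W \<union> X) \<le> v W + (\<Sum>u\<in>X. marg v u W)"
proof -
  have "finite X"
    using assms(2) finite_ground finite_subset by blast
  then show ?thesis
    using assms(2,3)
  proof (induction X rule: finite_induct)
    case empty
    then show ?case by simp
  next
    case (insert x X)
    have "marg v x (W \<union> X) \<le> marg v x W"
      using insert.prems insert.hyps(2) assms(1) by (intro marg_antimono) auto
    with insert show ?case
      by (simp add: marg_def)
  qed
qed

definition absorbs :: "'a set \<Rightarrow> 'a set \<Rightarrow> bool" where
  "absorbs A C \<longleftrightarrow> (\<forall>T\<subseteq>C. v (A \<union> T) \<le> v A + v C)"

lemma absorbs_insert_left:
  assumes "absorbs A C" "A \<subseteq> N" "C \<subseteq> N" "u \<in> N - (A \<union> C)"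
  shows "absorbs (insert u A) C"
  unfolding absorbs_def
proof (intro allI impI)
  fix T assume "T \<subseteq> C"
  then have "marg v u (A \<union> T) \<le> marg v u A" "v (A \<union> T) \<le> v A + v C"
    using assms by (auto intro!: marg_antimono simp: absorbs_def)
  then show "v (insert u A \<union> T) \<le> v (insert u A) + v C"
    by (simp add: marg_def)
qed

lemma absorbs_insert_right:
  assumes "absorbs C A" "A \<subseteq> N" "C \<subseteq> N" "u \<in> N - (A \<union> C)"
    and "0 \<le> marg v u A" "marg v u C \<le> marg v u A"
  shows "absorbs C (insert u A)"
  unfolding absorbs_def
proof (intro allI impI)
  fix T assume T: "T \<subseteq> insert u A"
  show "v (C \<union> T) \<le> v C + v (insert u A)"
  proof (cases "u \<in> T")
    case False
    then have "v (C \<union> T) \<le> v C + v A"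
      using T assms(1) unfolding absorbs_def by blast
    with assms(5) show ?thesis
      by (simp add: marg_def)
  next
    case True
    define T' where "T' = T - {u}"
    have "T' \<subseteq> A" "T = insert u T'"
      using T True by (auto simp: T'_def)
    then have "marg v u (C \<union> T') \<le> marg v u C" "v (C \<union> T') \<le> v C + v A"
      using assms(1-4) by (auto intro!: marg_antimono simp: absorbs_def)
    with assms(6) \<open>T = insert u T'\<close> show ?thesis
      by (simp add: marg_def)
  qed
qed

definition candidate_pair :: "('a \<Rightarrow> real) \<Rightarrow> 'a set \<Rightarrow> 'a set \<Rightarrow> 'a set \<Rightarrow> bool" where
  "candidate_pair f W A C \<longleftrightarrow> A \<inter> C = {} \<and> A \<subseteq> N \<and> C \<subseteq> N \<and> W \<subseteq> N
    \<and> absorbs A C \<and> absorbs C A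
    \<and> (\<forall>w\<in>W. w \<notin> A \<union> C \<and> marg v w A \<le> f w \<and> marg v w C \<le> f w)"

lemma candidate_pair_commute: "candidate_pair f W A C \<longleftrightarrow> candidate_pair f W C A"
  unfolding candidate_pair_def by blast

lemma candidate_pair_empty: "candidate_pair f {} {} {}"
  unfolding candidate_pair_def absorbs_def using v_empty by simp

lemma candidate_pair_insert:
  assumes pair: "candidate_pair f W A C" and u: "u \<in> N - (W \<union> A \<union> C)"
    and "0 \<le> marg v u A" "marg v u C \<le> marg v u A"
  shows "candidate_pair f W (insert u A) C"
proof -
  have "marg v w (insert u A) \<le> f w" if "w \<in> W" for w
  proof -
    have "marg v w (insert u A) \<le> marg v w A"
      using pair u that by (intro marg_antimono) (auto simp: candidate_pair_def)
    with pair that show ?thesis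
      unfolding candidate_pair_def by fastforce
  qed
  with assms show ?thesis
    by (auto simp: candidate_pair_def intro: absorbs_insert_left absorbs_insert_right)
qed

lemma candidate_pair_reject:
  assumes "candidate_pair f W A C" "u \<in> N - (A \<union> C)" "marg v u A \<le> f u" "marg v u C \<le> f u"
  shows "candidate_pair f (insert u W) A C"
  using assms unfolding candidate_pair_def by blast

lemma candidate_pair_extend_le:
  assumes pair: "candidate_pair f W A C" and "X \<subseteq> W" "T \<subseteq> C"
  shows "v (A \<union> T \<union> X) \<le> v A + v C + sum f X"
proof -
  have sets: "A \<union> T \<subseteq> N" "X \<subseteq> N" "(A \<union> T) \<inter> X = {}"
    using assms unfolding candidate_pair_def by auto
  have "(\<Sum>w\<in>X. marg v w (A \<union> T)) \<le> sum f X"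
  proof (rule sum_mono)
    fix w assume "w \<in> X"
    have "marg v w (A \<union> T) \<le> marg v w A"
      using sets \<open>w \<in> X\<close> by (intro marg_antimono) auto
    with pair \<open>w \<in> X\<close> \<open>X \<subseteq> W\<close> show "marg v w (A \<union> T) \<le> f w"
      unfolding candidate_pair_def by fastforce
  qed
  then have "v (A \<union> T \<union> X) \<le> v (A \<union> T) + sum f X"
    using union_le_marg_sum[OF sets] by linarith
  moreover have "v (A \<union> T) \<le> v A + v C"
    using pair \<open>T \<subseteq> C\<close> unfolding candidate_pair_def absorbs_def by blast
  ultimately show ?thesis
    by linarith
qed

lemma candidate_pair_union_le:
  assumes "candidate_pair f W A C" and "X \<subseteq> W" "T1 \<subseteq> A" "T2 \<subseteq> C"
  shows "v (X \<union> T1 \<union> T2) \<le> 2 * (v A + v C) + 2 * sum f X"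
proof -
  define P where "P = A \<union> T2 \<union> X"
  define Q where "Q = C \<union> T1 \<union> X"
  have "v P \<le> v A + v C + sum f X" "v Q \<le> v C + v A + sum f X"
    unfolding P_def Q_def using assms candidate_pair_commute
    by (blast intro: candidate_pair_extend_le)+
  moreover have "P \<subseteq> N" "Q \<subseteq> N" "P \<inter> Q = X \<union> T1 \<union> T2"
    using assms unfolding P_def Q_def candidate_pair_def by auto
  ultimately show ?thesis
    using union_inter_le[of P Q] v_nonneg[of "P \<union> Q"] by auto
qed

end

lemma rho_mono:
  assumes "1 \<le> alpha" "0 \<le> eps" "t \<le> t'"
  shows "rho eps alpha t \<le> rho eps alpha t'"
  unfolding rho_def using assms by (intro mult_left_mono power_increasing) auto

locale bfm_run = submodular_valuation "set order" v
  for order :: "'a list" and v :: "'a set \<Rightarrow> real" +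
  fixes c :: "'a \<Rightarrow> real" and B alpha beta eps :: real
    and tie :: "nat \<Rightarrow> 'a set \<Rightarrow> 'a set \<Rightarrow> 'a \<Rightarrow> bool"
  assumes distinct_order: "distinct order"
    and cost_nonneg: "u \<in> set order \<Longrightarrow> 0 \<le> c u"
    and B_pos: "0 < B" and alpha_ge_1: "1 \<le> alpha" and beta_nonneg: "0 \<le> beta"
    and eps_pos: "0 < eps"
begin

definition valid_state :: "'a bfm_state \<Rightarrow> bool" where
  "valid_state s \<longleftrightarrow> Rs s \<subseteq> set order \<and> (\<forall>w\<in>Rs s. c w \<le> prc s w)
    \<and> ust s \<subseteq> set order \<and> (ust s = {} \<or> (\<exists>w. ust s = {w}))"

definition round_inv :: "real \<Rightarrow> 'a set \<Rightarrow> 'a bfm_state \<Rightarrow> bool" where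
  "round_inv k R0 s \<longleftrightarrow> valid_state s \<and> Rs s \<subseteq> R0
    \<and> candidate_pair (\<lambda>w. k * c w) (R0 - Rs s) (S1 s) (S2 s)"

lemma Rs_bfm_step: "Rs s - {u} \<subseteq> Rs (bfm_step v c B beta tie t r u s)"
  by (auto simp: bfm_step_def Let_def)

lemma candidates_bfm_step:
  "S1 (bfm_step v c B beta tie t r u s) \<union> S2 (bfm_step v c B beta tie t r u s)
     \<subseteq> insert u (S1 s \<union> S2 s)"
  by (auto simp: bfm_step_def Let_def)

lemma round_inv_reject:
  assumes inv: "round_inv k R0 s" and u: "u \<in> Rs s" "u \<notin> S1 s \<union> S2 s"
    and "marg v u (S1 s) \<le> k * c u" "marg v u (S2 s) \<le> k * c u"
    and "\<forall>w\<in>Rs s - {u}. c w \<le> p w"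
  shows "round_inv k R0 (s\<lparr>prc := p, Rs := Rs s - {u}\<rparr>)"
proof -
  have "R0 - (Rs s - {u}) = insert u (R0 - Rs s)"
    using inv u by (auto simp: round_inv_def)
  moreover have "candidate_pair (\<lambda>w. k * c w) (insert u (R0 - Rs s)) (S1 s) (S2 s)"
    using assms by (intro candidate_pair_reject) (auto simp: round_inv_def valid_state_def)
  ultimately show ?thesis
    using assms by (auto simp: round_inv_def valid_state_def)
qed

lemma round_inv_stop:
  assumes "round_inv k R0 s" "u \<in> set order" "\<forall>w\<in>Rs s. c w \<le> p w"
  shows "round_inv k R0 (s\<lparr>prc := p, ust := {u}, stopd := True\<rparr>)"
  using assms by (simp add: round_inv_def valid_state_def)

lemma round_inv_add_S1:
  assumes "round_inv k R0 s" "u \<in> Rs s" "u \<notin> S1 s \<union> S2 s"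
    and "0 \<le> marg v u (S1 s)" "marg v u (S2 s) \<le> marg v u (S1 s)"
    and "\<forall>w\<in>Rs s. c w \<le> p w"
  shows "round_inv k R0 (s\<lparr>prc := p, S1 := insert u (S1 s)\<rparr>)"
proof -
  have "candidate_pair (\<lambda>w. k * c w) (R0 - Rs s) (insert u (S1 s)) (S2 s)"
    using assms by (intro candidate_pair_insert) (auto simp: round_inv_def valid_state_def)
  with assms show ?thesis
    by (simp add: round_inv_def valid_state_def)
qed

lemma round_inv_add_S2:
  assumes "round_inv k R0 s" "u \<in> Rs s" "u \<notin> S1 s \<union> S2 s"
    and "0 \<le> marg v u (S2 s)" "marg v u (S1 s) \<le> marg v u (S2 s)"
    and "\<forall>w\<in>Rs s. c w \<le> p w"
  shows "round_inv k R0 (s\<lparr>prc := p, S2 := insert u (S2 s)\<rparr>)"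
proof -
  have "candidate_pair (\<lambda>w. k * c w) (R0 - Rs s) (insert u (S2 s)) (S1 s)"
    using assms candidate_pair_commute
    by (intro candidate_pair_insert) (auto simp: round_inv_def valid_state_def)
  with assms show ?thesis
    by (simp add: round_inv_def valid_state_def candidate_pair_commute)
qed

lemma round_inv_bfm_step:
  assumes r: "0 < r" and inv: "round_inv (beta + r / B) R0 s"
    and u: "u \<in> Rs s" "u \<notin> S1 s \<union> S2 s"
  shows "round_inv (beta + r / B) R0 (bfm_step v c B beta tie t r u s)"
proof (cases "stopd s")
  case True
  then show ?thesis
    using inv by (simp add: bfm_step_def)
next
  case running: False
  define k where "k = beta + r / B"
  define j1 where "j1 \<longleftrightarrow> marg v u (S1 s) > marg v u (S2 s)
    \<or> (marg v u (S1 s) = marg v u (S2 s) \<and> tie t (S1 s) (S2 s) u)"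
  define Sj where "Sj = (if j1 then S1 s else S2 s)"
  define q where "q = min (prc s u) (marg v u Sj / k)"
  define p' where "p' = (prc s)(u := q)"
  have step_eq: "bfm_step v c B beta tie t r u s =
    (if c u \<le> q then
       (if v (insert u Sj) - sum p' (insert u Sj) > r then s\<lparr>prc := p', ust := {u}, stopd := True\<rparr>
        else if j1 then s\<lparr>prc := p', S1 := insert u Sj\<rparr> else s\<lparr>prc := p', S2 := insert u Sj\<rparr>)
     else s\<lparr>prc := p', Rs := Rs s - {u}\<rparr>)"
    using running unfolding bfm_step_def Let_def j1_def Sj_def q_def p'_def k_def marg_def
    by (simp only: if_False)
  have "0 < k"
    using r B_pos beta_nonneg unfolding k_def by (simp add: add_nonneg_pos)
  have Sj_max: "marg v u (S1 s) \<le> marg v u Sj" "marg v u (S2 s) \<le> marg v u Sj"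
    unfolding Sj_def j1_def by auto
  have prices: "\<forall>w\<in>Rs s. c w \<le> prc s w" and u_N: "u \<in> set order"
    using inv u unfolding round_inv_def valid_state_def by auto
  then have cu: "0 \<le> c u" "c u \<le> prc s u"
    using u cost_nonneg by auto
  show ?thesis
  proof (cases "c u \<le> q")
    case accept: True
    have "0 \<le> marg v u Sj / k"
      using accept cu unfolding q_def by linarith
    then have "0 \<le> marg v u Sj"
      using \<open>0 < k\<close> by (simp add: zero_le_divide_iff)
    moreover have "\<forall>w\<in>Rs s. c w \<le> p' w"
      using prices accept unfolding p'_def by auto
    ultimately show ?thesis
      using inv[folded k_def] u u_N Sj_max accept
      by (auto simp: step_eq Sj_def k_def
          intro: round_inv_stop round_inv_add_S1 round_inv_add_S2)
  next
    case reject: False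
    have "marg v u Sj / k < c u"
      using reject cu unfolding q_def by linarith
    then have "marg v u Sj < k * c u"
      using \<open>0 < k\<close> by (simp add: divide_less_eq mult.commute)
    moreover have "\<forall>w\<in>Rs s - {u}. c w \<le> p' w"
      using prices unfolding p'_def by auto
    ultimately show ?thesis
      using inv[folded k_def] u Sj_max reject
      by (auto simp: step_eq k_def intro!: round_inv_reject)
  qed
qed

lemma round_inv_fold:
  assumes "0 < r"
  shows "distinct L \<Longrightarrow> set L \<subseteq> Rs s \<Longrightarrow> set L \<inter> (S1 s \<union> S2 s) = {}
    \<Longrightarrow> round_inv (beta + r / B) R0 s
    \<Longrightarrow> round_inv (beta + r / B) R0 (fold (bfm_step v c B beta tie t r) L s)"
proof (induction L arbitrary: s)
  case Nil
  then show ?case by simp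
next
  case (Cons u L)
  let ?s' = "bfm_step v c B beta tie t r u s"
  have "round_inv (beta + r / B) R0 ?s'"
    using Cons.prems by (intro round_inv_bfm_step[OF assms]) auto
  moreover have "set L \<subseteq> Rs ?s'" "set L \<inter> (S1 ?s' \<union> S2 ?s') = {}"
    using Cons.prems Rs_bfm_step[of s u] candidates_bfm_step[of t r u s] by auto
  ultimately show ?case
    using Cons.IH Cons.prems(1) by simp
qed

lemma round_inv_bfm_round:
  assumes "valid_state s"
  shows "round_inv (beta + rho eps alpha t / B) (Rs s) (bfm_round order v c B alpha beta eps tie t s)"
proof -
  have "0 < rho eps alpha t"
    using eps_pos alpha_ge_1 by (simp add: rho_def)
  moreover have "round_inv (beta + rho eps alpha t / B) (Rs s) (s\<lparr>S1 := {}, S2 := {}, stopd := False\<rparr>)"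
    using assms candidate_pair_empty by (simp add: round_inv_def valid_state_def)
  ultimately show ?thesis
    unfolding bfm_round_def Let_def using distinct_order
    by (intro round_inv_fold) auto
qed

abbreviation state :: "nat \<Rightarrow> 'a bfm_state" where
  "state t \<equiv> bfm order v c B alpha beta eps tie t"

definition scale :: "nat \<Rightarrow> real" where
  "scale t = beta + rho eps alpha t / B"

lemma valid_state_bfm: "valid_state (state t)"
proof (induction t)
  case 0
  then show ?case
    by (simp add: valid_state_def)
next
  case (Suc t)
  then show ?case
    using round_inv_bfm_round[of "state t" "Suc t"] by (simp add: round_inv_def)
qed

lemma round_inv_bfm: "round_inv (scale (Suc t)) (Rs (state t)) (state (Suc t))"
  using round_inv_bfm_round[OF valid_state_bfm] by (simp add: scale_def)

lemma Rs_bfm_antimono: "antimono (\<lambda>t. Rs (state t))"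
  using round_inv_bfm by (auto simp: antimono_iff_le_Suc round_inv_def)

definition rejected :: "nat \<Rightarrow> 'a set" where
  "rejected t = Rs (state (t - 1)) - Rs (state t)"

lemma rejected_disjoint:
  assumes "t \<noteq> t'"
  shows "rejected t \<inter> rejected t' = {}"
proof -
  have "rejected t \<inter> rejected t' = {}" if "t < t'" for t t'
  proof -
    have "Rs (state (t' - 1)) \<subseteq> Rs (state t)"
      using that antimonoD[OF Rs_bfm_antimono, of t "t' - 1"] by simp
    then show ?thesis
      by (auto simp: rejected_def)
  qed
  with assms show ?thesis
    by (metis inf_commute linorder_neqE_nat)
qed

lemma candidate_pair_rejected:
  "candidate_pair (\<lambda>w. scale (Suc t) * c w) (rejected (Suc t)) (S1 (state (Suc t))) (S2 (state (Suc t)))"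
  using round_inv_bfm[of t] by (simp add: round_inv_def rejected_def)

lemma exists_rejected:
  "u \<in> Rs (state 0) \<Longrightarrow> u \<notin> Rs (state n) \<Longrightarrow> \<exists>t\<in>{1..n}. u \<in> rejected t"
proof (induction n)
  case 0
  then show ?case by simp
next
  case (Suc n)
  then show ?case
    by (cases "u \<in> Rs (state n)") (auto simp: rejected_def intro: bexI[of _ "Suc n"])
qed

lemma bfm_stops_cover:
  assumes "1 \<le> M" "bfm_stops order v c B alpha beta eps tie M"
  shows "Rs (state 0) \<subseteq> (\<Union>t\<in>{1..M}. rejected t \<union> S1 (state t) \<union> S2 (state t)) \<union> ust (state M)"
proof
  fix u assume u: "u \<in> Rs (state 0)"
  show "u \<in> (\<Union>t\<in>{1..M}. rejected t \<union> S1 (state t) \<union> S2 (state t)) \<union> ust (state M)"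
  proof (cases "u \<in> Rs (state M)")
    case False
    then show ?thesis
      using exists_rejected[OF u] by blast
  next
    case True
    then have "u \<in> S1 (state (M - 1)) \<union> S2 (state (M - 1)) \<union> S1 (state M) \<union> S2 (state M) \<union> ust (state M)"
      using assms(2) unfolding bfm_stops_def Let_def by blast
    moreover have "M - 1 \<in> {1..M}" if "u \<in> S1 (state (M - 1)) \<union> S2 (state (M - 1))"
      using that assms(1) by (cases "M - 1") auto
    ultimately show ?thesis
      using assms(1) by auto
  qed
qed

lemma value_inter_ust_le: "v (A \<inter> ust (state t)) \<le> v (ust (state t))"
proof -
  have "ust (state t) \<subseteq> set order" "ust (state t) = {} \<or> (\<exists>w. ust (state t) = {w})"
    using valid_state_bfm[of t] by (auto simp: valid_state_def)
  then show ?thesis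
    using v_empty v_nonneg by (cases "A \<inter> ust (state t) = {}") (auto simp: Int_absorb1)
qed

lemma sum_rejected_le:
  assumes "A \<subseteq> set order"
  shows "(\<Sum>t = 1..M. sum c (A \<inter> rejected t)) \<le> sum c A"
proof -
  have fin: "finite A"
    using assms finite_subset by blast
  have "(\<Sum>t = 1..M. sum c (A \<inter> rejected t)) = sum c (\<Union>t\<in>{1..M}. A \<inter> rejected t)"
    using fin rejected_disjoint by (intro sum.UNION_disjoint[symmetric]) auto
  also have "\<dots> \<le> sum c A"
    using fin assms cost_nonneg by (intro sum_mono2) auto
  finally show ?thesis .
qed

lemma round_value_le:
  assumes "t \<in> {1..M}" "A \<subseteq> set order"
  shows "v (A \<inter> (rejected t \<union> S1 (state t) \<union> S2 (state t)))
    \<le> 2 * (v (S1 (state t)) + v (S2 (state t))) + 2 * scale M * sum c (A \<inter> rejected t)"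
proof -
  obtain n where t: "t = Suc n"
    using assms(1) by (cases t) auto
  have "v (A \<inter> rejected t \<union> A \<inter> S1 (state t) \<union> A \<inter> S2 (state t))
      \<le> 2 * (v (S1 (state t)) + v (S2 (state t))) + 2 * (\<Sum>w\<in>A \<inter> rejected t. scale t * c w)"
    using candidate_pair_rejected[of n] t by (intro candidate_pair_union_le) auto
  moreover have "scale t * sum c (A \<inter> rejected t) \<le> scale M * sum c (A \<inter> rejected t)"
    using assms eps_pos alpha_ge_1 B_pos cost_nonneg unfolding scale_def
    by (intro mult_right_mono sum_nonneg add_left_mono divide_right_mono rho_mono) auto
  ultimately show ?thesis
    by (simp add: Int_Un_distrib sum_distrib_left[symmetric])
qed

lemma welfare_bound:
  assumes M: "1 \<le> M" and stops: "bfm_stops order v c B alpha beta eps tie M"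
    and Opt: "Opt \<subseteq> set order" "sum c Opt \<le> B"
  shows "v Opt - 2 * beta * sum c Opt \<le> 2 * rho eps alpha M
    + 2 * (\<Sum>t = 1..M. v (S1 (state t)) + v (S2 (state t))) + 2 * v (ust (state M))"
proof -
  define P where "P t = Opt \<inter> (rejected t \<union> S1 (state t) \<union> S2 (state t))" for t
  have "c u \<le> sum c Opt" if "u \<in> Opt" for u
    using that Opt(1) cost_nonneg finite_subset
    by (intro member_le_sum) auto
  then have "Opt \<subseteq> Rs (state 0)"
    using Opt by force
  then have "Opt = (\<Union>t\<in>{1..M}. P t) \<union> (Opt \<inter> ust (state M))"
    using bfm_stops_cover[OF M stops] unfolding P_def by blast
  then have "v Opt \<le> (\<Sum>t = 1..M. v (P t)) + v (Opt \<inter> ust (state M))"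
    using Opt(1) subadditive_UN[of "{1..M}" P] subadditive[of "\<Union>t\<in>{1..M}. P t" "Opt \<inter> ust (state M)"]
    by (fastforce simp: P_def)
  also have "\<dots> \<le> (\<Sum>t = 1..M. 2 * (v (S1 (state t)) + v (S2 (state t)))
      + 2 * scale M * sum c (Opt \<inter> rejected t)) + v (ust (state M))"
    unfolding P_def using Opt(1) value_inter_ust_le
    by (intro add_mono sum_mono round_value_le) auto
  also have "\<dots> \<le> 2 * (\<Sum>t = 1..M. v (S1 (state t)) + v (S2 (state t)))
      + 2 * scale M * sum c Opt + v (ust (state M))"
  proof -
    have "0 \<le> scale M"
      using eps_pos alpha_ge_1 B_pos beta_nonneg by (simp add: scale_def rho_def)
    then show ?thesis
      using mult_left_mono[OF sum_rejected_le[OF Opt(1), of M]]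
      by (simp add: sum.distrib sum_distrib_left[symmetric])
  qed
  finally have "v Opt \<le> 2 * (\<Sum>t = 1..M. v (S1 (state t)) + v (S2 (state t)))
      + 2 * scale M * sum c Opt + v (ust (state M))" .
  moreover have "rho eps alpha M * (sum c Opt / B) \<le> rho eps alpha M"
    using Opt eps_pos alpha_ge_1 B_pos by (intro mult_left_le) (auto simp: rho_def)
  then have "scale M * sum c Opt \<le> beta * sum c Opt + rho eps alpha M"
    by (simp add: scale_def algebra_simps)
  moreover have "0 \<le> v (ust (state M))"
    using valid_state_bfm[of M] v_nonneg by (simp add: valid_state_def)
  ultimately show ?thesis
    by linarith
qed

end

theorem lemma4p3:
  fixes order :: "'a list" and v :: "'a set \<Rightarrow> real" and c :: "'a \<Rightarrow> real"
    and B alpha beta eps :: real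
    and tie :: "nat \<Rightarrow> 'a set \<Rightarrow> 'a set \<Rightarrow> 'a \<Rightarrow> bool"
    and M :: nat and Opt :: "'a set"
  assumes "distinct order"
    and "v {} = 0"
    and "\<forall>S. S \<subseteq> set order \<longrightarrow> v S \<ge> 0"
    and "submodular_on (set order) v"
    and "\<forall>u \<in> set order. c u \<ge> 0"
    and "B > 0" and "alpha > 1" and "beta > 1" and "eps > 0"
    and "M \<ge> 1"
    and "bfm_stops order v c B alpha beta eps tie M"
    and "\<forall>t. 1 \<le> t \<and> t < M \<longrightarrow> \<not> bfm_stops order v c B alpha beta eps tie t"
    and "Opt \<subseteq> set order" and "sum c Opt \<le> B"
    and "\<forall>S. S \<subseteq> set order \<and> sum c S \<le> B \<longrightarrow> v S - sum c S \<le> v Opt - sum c Opt"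
  shows "v Opt - 2 * beta * sum c Opt \<le>
    2 * rho eps alpha M
    + 2 * (\<Sum>t = 1..M. v (S1 (bfm order v c B alpha beta eps tie t))
                      + v (S2 (bfm order v c B alpha beta eps tie t)))
    + 2 * v (ust (bfm order v c B alpha beta eps tie M))"
proof -
  interpret bfm_run order v c B alpha beta eps tie
    using assms by unfold_locales auto
  show ?thesis
    using welfare_bound assms(10,11,13,14) .
qed

end
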